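(* Consider the linear family $F_\theta=\theta^\top\psi$, $\theta\in\Theta\subset\mathbb R^d$, and assume (A2) and (A4). Let $\Gamma_0(\theta)=\Lambda_0(F_\theta)-\pi^1(F_\theta)$ and $\Gamma(\theta)=\Gamma_0(\theta)+\tfrac12(v^\top\theta)^2$. Let $\theta^\circ$ be a minimizer of $\Gamma$, let $r^\circ=\varrho_a-\Lambda_0(F_{\theta^\circ})$ and $\theta^*=\theta^\circ+r^\circ v$, and suppose $\theta^*\in\Theta$. Then $\theta^*$ is a global minimizer over $\Theta$ of $\theta\mapsto\bar J^*_\infty(\kappa;\theta)$, for every $\kappa>1$.
   Context: Setting: $(\mathsf Y,\mathcal B)$ measurable space; $X^0,X^1$ mutually independent stationary $\mathsf Y$-valued processes with marginals $\pi^0,\pi^1$, independent of a change time $\tau_a$; $\nu(G)=\int G\,d\nu$. $\Lambda_0(G)=\lim_n\frac1n\log E[\exp(\sum_{k=0}^{n-1}G(X^0_k))]$. $\psi=(\psi^1,\dots,\psi^d):\mathsf Y\to\mathbb R^d$ is a fixed measurable function. (A2): for some $\varrho_a\in(0,\infty)$, $\lim_n\frac1n\log P\{\tau_a\ge n\}=-\varrho_a$. (A3) for a function $F$: with $\Upsilon_0(\vartheta)=\Lambda_0(\vartheta F)$, $F$ belongs to the class $\mathcal G$ (functions for which the cumulant generating functions for $X^0,X^1$ exist finitely and the twisted marginals, twisted processes and relative entropy rates exist); there exist $\vartheta_+>\vartheta_0>0$ with $\Upsilon_0(\vartheta_0)=0$, $\Upsilon_0(\vartheta_+)=\varrho_a$;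 $\Upsilon_0$ is finite and $C^1$ near $[0,\vartheta_+]$; $\vartheta F\in\mathcal G$ for $\vartheta$ near $[0,\vartheta_+]$. (A4) for the family $\{F_\theta\}$: $\Theta$ is open and $F_\theta$ satisfies (A3) for each $\theta$; (i) $\psi_\theta=\nabla_\theta F_\theta$ (here $=\psi$) has components in $\mathcal G$; (ii) $(\vartheta,\theta)\mapsto\Lambda_0(\vartheta F_\theta)$ is $C^1$ on a neighborhood of $\{(\vartheta,\theta):\vartheta\in[0,\vartheta_+^\theta],\theta\in\Theta\}$; (iii) there is $v\in\mathbb R^d$ with $v^\top\psi\equiv1$. Notation: $\vartheta_+^\theta>\vartheta_0^\theta>0$ solve $\Lambda_0(\vartheta_0^\theta F_\theta)=0$, $\Lambda_0(\vartheta_+^\theta F_\theta)=\varrho_a$; $m_1^\theta=\pi^1(F_\theta)$ (assumed positive); $\bar J^*_\infty(\kappa;\theta)=\frac{1}{m_1^\theta\vartheta_+^\theta}\log\kappa$. *)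

theory Defs
  imports "HOL-Probability.Probability"
begin

definition cgf_seq :: "'w measure \<Rightarrow> (nat \<Rightarrow> 'w \<Rightarrow> 'y) \<Rightarrow> ('y \<Rightarrow> real) \<Rightarrow> nat \<Rightarrow> real" where
  "cgf_seq M X G = (\<lambda>n. ln (integral\<^sup>L M (\<lambda>\<omega>. exp (\<Sum>k<n. G (X k \<omega>)))) / real n)"

definition cgf_exists :: "'w measure \<Rightarrow> (nat \<Rightarrow> 'w \<Rightarrow> 'y) \<Rightarrow> ('y \<Rightarrow> real) \<Rightarrow> bool" where
  "cgf_exists M X G \<longleftrightarrow>
     (\<forall>n. integrable M (\<lambda>\<omega>. exp (\<Sum>k<n. G (X k \<omega>)))) \<and> convergent (cgf_seq M X G)"

definition cgf :: "'w measure \<Rightarrow> (nat \<Rightarrow> 'w \<Rightarrow> 'y) \<Rightarrow> ('y \<Rightarrow> real) \<Rightarrow> real" where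
  "cgf M X G = lim (cgf_seq M X G)"

definition marginal :: "'w measure \<Rightarrow> 'y measure \<Rightarrow> (nat \<Rightarrow> 'w \<Rightarrow> 'y) \<Rightarrow> 'y measure" where
  "marginal M Y X = distr M Y (X 0)"

definition stationary :: "'w measure \<Rightarrow> 'y measure \<Rightarrow> (nat \<Rightarrow> 'w \<Rightarrow> 'y) \<Rightarrow> bool" where
  "stationary M Y X \<longleftrightarrow>
     (\<forall>k m. distr M (PiM {..<m} (\<lambda>_. Y)) (\<lambda>\<omega>. \<lambda>i\<in>{..<m}. X (i + k) \<omega>)
          = distr M (PiM {..<m} (\<lambda>_. Y)) (\<lambda>\<omega>. \<lambda>i\<in>{..<m}. X i \<omega>))"

definition in_classG :: "'w measure \<Rightarrow> 'y measure \<Rightarrow> (nat \<Rightarrow> 'w \<Rightarrow> 'y) \<Rightarrow> (nat \<Rightarrow> 'w \<Rightarrow> 'y)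
    \<Rightarrow> ('y \<Rightarrow> real) \<Rightarrow> bool" where
  "in_classG M Y X0 X1 G \<longleftrightarrow> G \<in> borel_measurable Y \<and> cgf_exists M X0 G \<and> cgf_exists M X1 G
     \<and> integrable (marginal M Y X0) G \<and> integrable (marginal M Y X1) G"

definition C1_on :: "'a::real_normed_vector set \<Rightarrow> ('a \<Rightarrow> 'b::real_normed_vector) \<Rightarrow> bool" where
  "C1_on U f \<longleftrightarrow> (\<exists>f'. continuous_on U f' \<and> (\<forall>p\<in>U. (f has_derivative blinfun_apply (f' p)) (at p)))"

definition A3 :: "'w measure \<Rightarrow> 'y measure \<Rightarrow> (nat \<Rightarrow> 'w \<Rightarrow> 'y) \<Rightarrow> (nat \<Rightarrow> 'w \<Rightarrow> 'y)
    \<Rightarrow> real \<Rightarrow> ('y \<Rightarrow> real) \<Rightarrow> bool" where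
  "A3 M Y X0 X1 \<rho> F \<longleftrightarrow> in_classG M Y X0 X1 F \<and>
     (\<exists>t0 tp. 0 < t0 \<and> t0 < tp \<and>
        cgf_exists M X0 (\<lambda>y. t0 * F y) \<and> cgf M X0 (\<lambda>y. t0 * F y) = 0 \<and>
        cgf_exists M X0 (\<lambda>y. tp * F y) \<and> cgf M X0 (\<lambda>y. tp * F y) = \<rho> \<and>
        (\<exists>U. open U \<and> {0..tp} \<subseteq> U \<and>
             (\<forall>t\<in>U. in_classG M Y X0 X1 (\<lambda>y. t * F y)) \<and>
             C1_on U (\<lambda>t. cgf M X0 (\<lambda>y. t * F y))))"

definition theta_plus :: "'w measure \<Rightarrow> (nat \<Rightarrow> 'w \<Rightarrow> 'y) \<Rightarrow> real \<Rightarrow> ('y \<Rightarrow> real) \<Rightarrow> real" where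
  "theta_plus M X0 \<rho> F = (THE tp. 0 < tp \<and>
      (\<exists>t0. 0 < t0 \<and> t0 < tp \<and> cgf_exists M X0 (\<lambda>y. t0 * F y) \<and> cgf M X0 (\<lambda>y. t0 * F y) = 0) \<and>
      cgf_exists M X0 (\<lambda>y. tp * F y) \<and> cgf M X0 (\<lambda>y. tp * F y) = \<rho>)"

definition Flin :: "('y \<Rightarrow> real ^ 'd) \<Rightarrow> real ^ 'd \<Rightarrow> 'y \<Rightarrow> real" where
  "Flin \<psi> \<theta> = (\<lambda>y. \<theta> \<bullet> \<psi> y)"

definition m1 :: "'w measure \<Rightarrow> 'y measure \<Rightarrow> (nat \<Rightarrow> 'w \<Rightarrow> 'y) \<Rightarrow> ('y \<Rightarrow> real) \<Rightarrow> real" where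
  "m1 M Y X1 F = integral\<^sup>L (marginal M Y X1) F"

definition Jbar :: "'w measure \<Rightarrow> 'y measure \<Rightarrow> (nat \<Rightarrow> 'w \<Rightarrow> 'y) \<Rightarrow> (nat \<Rightarrow> 'w \<Rightarrow> 'y)
    \<Rightarrow> real \<Rightarrow> ('y \<Rightarrow> real) \<Rightarrow> real \<Rightarrow> real" where
  "Jbar M Y X0 X1 \<rho> F \<kappa> = ln \<kappa> / (m1 M Y X1 F * theta_plus M X0 \<rho> F)"

definition Gamma0 :: "'w measure \<Rightarrow> 'y measure \<Rightarrow> (nat \<Rightarrow> 'w \<Rightarrow> 'y) \<Rightarrow> (nat \<Rightarrow> 'w \<Rightarrow> 'y)
    \<Rightarrow> ('y \<Rightarrow> real ^ 'd) \<Rightarrow> real ^ 'd \<Rightarrow> real" where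
  "Gamma0 M Y X0 X1 \<psi> \<theta> = cgf M X0 (Flin \<psi> \<theta>) - m1 M Y X1 (Flin \<psi> \<theta>)"

definition Gamma :: "'w measure \<Rightarrow> 'y measure \<Rightarrow> (nat \<Rightarrow> 'w \<Rightarrow> 'y) \<Rightarrow> (nat \<Rightarrow> 'w \<Rightarrow> 'y)
    \<Rightarrow> ('y \<Rightarrow> real ^ 'd) \<Rightarrow> real ^ 'd \<Rightarrow> real ^ 'd \<Rightarrow> real" where
  "Gamma M Y X0 X1 \<psi> v \<theta> = Gamma0 M Y X0 X1 \<psi> \<theta> + (v \<bullet> \<theta>)\<^sup>2 / 2"

end

theory Submission
  imports Defs
begin

text \<open>Since \<open>v\<^sup>T\<psi> \<equiv> 1\<close>, shifting \<open>\<theta>\<close> by \<open>r v\<close> adds \<open>r\<close> to \<open>F\<^sub>\<theta>\<close>, hence adds \<open>r\<close> to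
  both \<open>\<Lambda>\<^sub>0(F\<^sub>\<theta>)\<close> and \<open>\<pi>\<^sup>1(F\<^sub>\<theta>)\<close>. Convexity of \<open>t \<mapsto> \<Lambda>\<^sub>0(t F)\<close> together with
  \<open>\<Lambda>\<^sub>0(0) = 0\<close> makes \<open>\<vartheta>\<^sub>+\<close> the unique positive \<open>t\<close> with \<open>\<Lambda>\<^sub>0(t F\<^sub>\<theta>) = \<rho>\<close>, so
  \<open>m\<^sub>1\<^sup>\<theta> \<vartheta>\<^sub>+\<^sup>\<theta> = \<pi>\<^sup>1(F\<^sub>\<vartheta>\<^sub>+\<^sub>\<theta>)\<close> with \<open>\<vartheta>\<^sub>+\<theta>\<close> on the level set \<open>{\<Lambda>\<^sub>0(F\<^sub>\<theta>) = \<rho>}\<close>, and it suffices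
  that \<open>\<theta>\<^sup>*\<close> maximises \<open>\<pi>\<^sup>1(F\<^sub>\<theta>)\<close> on that level set; \<open>\<theta>\<^sup>*\<close> itself lies on it, with
  \<open>\<vartheta>\<^sub>+ = 1\<close>. For \<open>\<theta>\<close> on the level set, its projection \<open>\<eta>\<close> orthogonal to \<open>v\<close> has
  \<open>\<Gamma>(\<eta>) = \<rho> - \<pi>\<^sup>1(F\<^sub>\<theta>)\<close>, whereas \<open>\<Gamma>(\<theta>\<degree>) \<ge> \<Gamma>\<^sub>0(\<theta>\<degree>) = \<rho> - \<pi>\<^sup>1(F\<^sub>\<theta>\<^sub>*)\<close>.\<close>

lemma cgf_exists_LIMSEQ: "cgf_exists M X G \<Longrightarrow> cgf_seq M X G \<longlonglongrightarrow> cgf M X G"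
  unfolding cgf_exists_def cgf_def by (simp add: convergent_LIMSEQ_iff)

lemma integral_exp_pos:
  fixes f :: "'a \<Rightarrow> real"
  assumes "prob_space M" "integrable M (\<lambda>\<omega>. exp (f \<omega>))"
  shows "0 < integral\<^sup>L M (\<lambda>\<omega>. exp (f \<omega>))"
proof -
  have "0 \<le> integral\<^sup>L M (\<lambda>\<omega>. exp (f \<omega>))" by (rule integral_nonneg_AE) (simp add: less_imp_le)
  moreover have "integral\<^sup>L M (\<lambda>\<omega>. exp (f \<omega>)) \<noteq> 0"
    using integral_nonneg_eq_0_iff_AE[OF assms(2)] prob_space.AE_False[OF assms(1)] by simp
  ultimately show ?thesis by linarith
qed

lemma cgf_seq_convex:
  assumes M: "prob_space M" and l: "0 \<le> l" "l \<le> 1"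
    and iG: "integrable M (\<lambda>\<omega>. exp (\<Sum>k<n. G (X k \<omega>)))"
    and iH: "integrable M (\<lambda>\<omega>. exp (\<Sum>k<n. H (X k \<omega>)))"
    and iC: "integrable M (\<lambda>\<omega>. exp (\<Sum>k<n. l * G (X k \<omega>) + (1 - l) * H (X k \<omega>)))"
  shows "cgf_seq M X (\<lambda>y. l * G y + (1 - l) * H y) n
           \<le> l * cgf_seq M X G n + (1 - l) * cgf_seq M X H n"
proof -
  define g where "g \<omega> = (\<Sum>k<n. G (X k \<omega>))" for \<omega>
  define h where "h \<omega> = (\<Sum>k<n. H (X k \<omega>))" for \<omega>
  have sum_comb: "(\<Sum>k<n. l * G (X k \<omega>) + (1 - l) * H (X k \<omega>)) = l * g \<omega> + (1 - l) * h \<omega>" for \<omega>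
    by (simp add: g_def h_def sum.distrib sum_distrib_left)
  define A where "A = integral\<^sup>L M (\<lambda>\<omega>. exp (g \<omega>))"
  define B where "B = integral\<^sup>L M (\<lambda>\<omega>. exp (h \<omega>))"
  define C where "C = integral\<^sup>L M (\<lambda>\<omega>. exp (l * g \<omega> + (1 - l) * h \<omega>))"
  have ig: "integrable M (\<lambda>\<omega>. exp (g \<omega>))" and ih: "integrable M (\<lambda>\<omega>. exp (h \<omega>))"
    and ic: "integrable M (\<lambda>\<omega>. exp (l * g \<omega> + (1 - l) * h \<omega>))"
    using iG iH iC by (simp_all add: g_def h_def sum_comb)
  have A: "0 < A" and B: "0 < B" and C: "0 < C"
    unfolding A_def B_def C_def using integral_exp_pos[OF M] ig ih ic by auto
  define K where "K = exp (l * ln A + (1 - l) * ln B)"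
  \<comment> \<open>Hoelder's inequality, via convexity of exp after normalising by \<open>A\<close> and \<open>B\<close>.\<close>
  have pointwise: "exp (l * g \<omega> + (1 - l) * h \<omega>) \<le> K * (l * (exp (g \<omega>) / A) + (1 - l) * (exp (h \<omega>) / B))"
    for \<omega>
  proof -
    have "exp (l * g \<omega> + (1 - l) * h \<omega>) = exp (l * (g \<omega> - ln A) + (1 - l) * (h \<omega> - ln B)) * K"
      unfolding K_def by (simp add: exp_add[symmetric] algebra_simps)
    also have "\<dots> \<le> (l * exp (g \<omega> - ln A) + (1 - l) * exp (h \<omega> - ln B)) * K"
      using convex_onD[OF exp_convex, of "1 - l" "g \<omega> - ln A" "h \<omega> - ln B"] l
      by (intro mult_right_mono) (simp_all add: K_def algebra_simps)
    also have "\<dots> = K * (l * (exp (g \<omega>) / A) + (1 - l) * (exp (h \<omega>) / B))"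
      using A B by (simp add: exp_diff)
    finally show ?thesis .
  qed
  have "C \<le> integral\<^sup>L M (\<lambda>\<omega>. K * (l * (exp (g \<omega>) / A) + (1 - l) * (exp (h \<omega>) / B)))"
    unfolding C_def using ig ih ic pointwise by (intro integral_mono) auto
  also have "\<dots> = K * (l * (A / A) + (1 - l) * (B / B))"
    using ig ih by (simp add: A_def B_def)
  also have "\<dots> = K" using A B by simp
  finally have "ln C \<le> l * ln A + (1 - l) * ln B"
    using C unfolding K_def by (metis ln_exp ln_le_cancel_iff exp_gt_zero)
  then have "ln C / real n \<le> (l * ln A + (1 - l) * ln B) / real n"
    by (simp add: divide_right_mono)
  then show ?thesis
    by (simp add: cgf_seq_def sum_comb A_def B_def C_def g_def h_def add_divide_distrib)
qed

lemma cgf_convex: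
  assumes M: "prob_space M" and l: "0 \<le> l" "l \<le> 1"
    and eG: "cgf_exists M X G" and eH: "cgf_exists M X H"
    and eC: "cgf_exists M X (\<lambda>y. l * G y + (1 - l) * H y)"
  shows "cgf M X (\<lambda>y. l * G y + (1 - l) * H y) \<le> l * cgf M X G + (1 - l) * cgf M X H"
proof (rule LIMSEQ_le)
  show "(\<lambda>n. l * cgf_seq M X G n + (1 - l) * cgf_seq M X H n) \<longlonglongrightarrow> l * cgf M X G + (1 - l) * cgf M X H"
    using eG eH by (intro tendsto_intros cgf_exists_LIMSEQ)
  show "\<exists>N. \<forall>n\<ge>N. cgf_seq M X (\<lambda>y. l * G y + (1 - l) * H y) n
                    \<le> l * cgf_seq M X G n + (1 - l) * cgf_seq M X H n"
    using eG eH eC by (auto simp: cgf_exists_def intro!: cgf_seq_convex[OF M l])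
qed (use eC in \<open>rule cgf_exists_LIMSEQ\<close>)

lemma cgf_zero:
  assumes "prob_space M"
  shows "cgf_exists M X (\<lambda>_. 0)" and "cgf M X (\<lambda>_. 0) = 0"
proof -
  have "cgf_seq M X (\<lambda>_. 0) = (\<lambda>n. 0)"
    using assms by (simp add: cgf_seq_def prob_space.prob_space fun_eq_iff)
  then show "cgf_exists M X (\<lambda>_. 0)" "cgf M X (\<lambda>_. 0) = 0"
    unfolding cgf_exists_def cgf_def using assms
    by (auto simp: convergent_const limI prob_space.finite_measure finite_measure.integrable_const)
qed

text \<open>A convex function vanishing at \<open>0\<close> attains a positive value at most once on \<open>t > 0\<close>.\<close>

lemma cgf_scaled_level_unique:
  assumes M: "prob_space M" and \<rho>: "0 < \<rho>" and "0 < a" "0 < b"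
    and "cgf_exists M X (\<lambda>y. a * F y)" "cgf M X (\<lambda>y. a * F y) = \<rho>"
    and "cgf_exists M X (\<lambda>y. b * F y)" "cgf M X (\<lambda>y. b * F y) = \<rho>"
  shows "a = b"
proof -
  have no_root_below: False
    if "0 < p" "p < q" "cgf_exists M X (\<lambda>y. p * F y)" "cgf M X (\<lambda>y. p * F y) = \<rho>"
      "cgf_exists M X (\<lambda>y. q * F y)" "cgf M X (\<lambda>y. q * F y) = \<rho>" for p q
  proof -
    have comb: "(\<lambda>y. p / q * (q * F y) + (1 - p / q) * 0) = (\<lambda>y. p * F y)"
      using that by auto
    have "cgf M X (\<lambda>y. p / q * (q * F y) + (1 - p / q) * 0)
            \<le> p / q * cgf M X (\<lambda>y. q * F y) + (1 - p / q) * cgf M X (\<lambda>_. 0)"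
      using that cgf_zero[OF M] by (intro cgf_convex[OF M]) (simp_all add: comb)
    then have "\<rho> \<le> p / q * \<rho>"
      using that by (simp add: comb cgf_zero[OF M])
    moreover have "p / q * \<rho> < \<rho>" using that \<rho> by (simp add: field_simps)
    ultimately show False by simp
  qed
  show ?thesis
  proof (cases a b rule: linorder_cases)
    case less
    show ?thesis using no_root_below[OF assms(3) less assms(5-8)] by blast
  next
    case greater
    show ?thesis using no_root_below[OF assms(4) greater assms(7,8,5,6)] by blast
  qed
qed

lemma theta_plus_eqI:
  assumes "prob_space M" "0 < \<rho>" "A3 M Y X0 X1 \<rho> F"
    and "0 < t" "cgf_exists M X0 (\<lambda>y. t * F y)" "cgf M X0 (\<lambda>y. t * F y) = \<rho>"
  shows "theta_plus M X0 \<rho> F = t"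
proof -
  obtain t0 tp where tp: "0 < t0" "t0 < tp"
    "cgf_exists M X0 (\<lambda>y. t0 * F y)" "cgf M X0 (\<lambda>y. t0 * F y) = 0"
    "cgf_exists M X0 (\<lambda>y. tp * F y)" "cgf M X0 (\<lambda>y. tp * F y) = \<rho>"
    using assms(3) unfolding A3_def by blast
  have "theta_plus M X0 \<rho> F = tp"
    unfolding theta_plus_def
  proof (rule the_equality)
    fix x
    assume "0 < x \<and> (\<exists>t0. 0 < t0 \<and> t0 < x \<and> cgf_exists M X0 (\<lambda>y. t0 * F y)
              \<and> cgf M X0 (\<lambda>y. t0 * F y) = 0)
            \<and> cgf_exists M X0 (\<lambda>y. x * F y) \<and> cgf M X0 (\<lambda>y. x * F y) = \<rho>"
    then show "x = tp"
      using cgf_scaled_level_unique[OF assms(1,2) _ _ _ _ tp(5,6)] tp(1,2) by auto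
  qed (use tp in \<open>auto intro!: exI[of _ t0]\<close>)
  also have "tp = t"
    using tp(1,2) by (intro cgf_scaled_level_unique[OF assms(1,2) _ assms(4) tp(5,6) assms(5,6)]) simp
  finally show ?thesis .
qed

lemma theta_plus_level:
  assumes "prob_space M" "0 < \<rho>" "A3 M Y X0 X1 \<rho> F"
  shows "0 < theta_plus M X0 \<rho> F"
    and "cgf_exists M X0 (\<lambda>y. theta_plus M X0 \<rho> F * F y)"
    and "cgf M X0 (\<lambda>y. theta_plus M X0 \<rho> F * F y) = \<rho>"
proof -
  obtain t0 t where "0 < t0" "t0 < t" "cgf_exists M X0 (\<lambda>y. t * F y)" "cgf M X0 (\<lambda>y. t * F y) = \<rho>"
    using assms(3) unfolding A3_def by blast
  with theta_plus_eqI[OF assms, of t] show "0 < theta_plus M X0 \<rho> F"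
    "cgf_exists M X0 (\<lambda>y. theta_plus M X0 \<rho> F * F y)"
    "cgf M X0 (\<lambda>y. theta_plus M X0 \<rho> F * F y) = \<rho>"
    by simp_all
qed

lemma cgf_shift:
  fixes F G :: "'y \<Rightarrow> real"
  assumes M: "prob_space M" and X_meas: "\<And>k. X k \<in> measurable M Y"
    and G: "\<And>y. y \<in> space Y \<Longrightarrow> G y = F y + r"
    and eF: "cgf_exists M X F"
  shows "cgf_exists M X G" and "cgf M X G = cgf M X F + r"
proof -
  have exp_sum: "exp (\<Sum>k<n. G (X k \<omega>)) = exp (real n * r) * exp (\<Sum>k<n. F (X k \<omega>))"
    if "\<omega> \<in> space M" for n \<omega>
    using that measurable_space[OF X_meas]
    by (simp add: G sum.distrib exp_add[symmetric] add.commute)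
  have int: "integrable M (\<lambda>\<omega>. exp (\<Sum>k<n. G (X k \<omega>)))" for n
    using eF unfolding cgf_exists_def
    by (subst Bochner_Integration.integrable_cong[OF refl exp_sum]) auto
  have "cgf_seq M X G n = cgf_seq M X F n + r" if "n \<ge> 1" for n
  proof -
    have "0 < integral\<^sup>L M (\<lambda>\<omega>. exp (\<Sum>k<n. F (X k \<omega>)))"
      using integral_exp_pos[OF M] eF by (auto simp: cgf_exists_def)
    with that show ?thesis
      by (simp add: cgf_seq_def Bochner_Integration.integral_cong[OF refl exp_sum] ln_mult field_simps)
  qed
  then have "cgf_seq M X G \<longlonglongrightarrow> cgf M X F + r"
    using tendsto_add[OF cgf_exists_LIMSEQ[OF eF] tendsto_const[of r]]
    by (rule_tac Lim_transform_eventually) (auto simp: eventually_sequentially intro!: exI[of _ 1])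
  then show "cgf_exists M X G" "cgf M X G = cgf M X F + r"
    using int unfolding cgf_exists_def cgf_def by (auto simp: convergent_def limI)
qed

lemma Flin_add_scaleR: "v \<bullet> \<psi> y = 1 \<Longrightarrow> Flin \<psi> (\<theta> + r *\<^sub>R v) y = Flin \<psi> \<theta> y + r"
  by (simp add: Flin_def inner_add_left)

lemma Flin_scaleR: "Flin \<psi> (t *\<^sub>R \<theta>) = (\<lambda>y. t * Flin \<psi> \<theta> y)"
  by (simp add: Flin_def fun_eq_iff)

lemma integrable_Flin:
  assumes "\<And>i. in_classG M Y X0 X1 (\<lambda>y. \<psi> y $ i)"
  shows "integrable (marginal M Y X1) (Flin \<psi> \<theta>)"
proof -
  have "Flin \<psi> \<theta> = (\<lambda>y. \<Sum>i\<in>UNIV. \<theta> $ i * \<psi> y $ i)"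
    by (simp add: Flin_def inner_vec_def fun_eq_iff)
  then show ?thesis using assms by (auto simp: in_classG_def)
qed

lemma m1_scale: "m1 M Y X1 (\<lambda>y. t * F y) = t * m1 M Y X1 F"
  by (simp add: m1_def)

lemma m1_shift:
  assumes "prob_space M" "\<And>k. X1 k \<in> measurable M Y"
    and "integrable (marginal M Y X1) F" "\<And>y. y \<in> space Y \<Longrightarrow> G y = F y + r"
  shows "m1 M Y X1 G = m1 M Y X1 F + r"
proof -
  have "prob_space (marginal M Y X1)"
    unfolding marginal_def using assms(1,2) by (rule prob_space.prob_space_distr)
  moreover have "m1 M Y X1 G = integral\<^sup>L (marginal M Y X1) (\<lambda>y. F y + r)"
    unfolding m1_def using assms(4) by (intro Bochner_Integration.integral_cong) (simp_all add: marginal_def)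
  ultimately show ?thesis
    using assms(3) by (simp add: m1_def prob_space.prob_space prob_space.finite_measure finite_measure.integrable_const)
qed

lemma m1_le_at_shifted_minimizer:
  assumes M: "prob_space M"
    and X0_meas: "\<And>k. X0 k \<in> measurable M Y" and X1_meas: "\<And>k. X1 k \<in> measurable M Y"
    and int: "\<And>\<theta>. integrable (marginal M Y X1) (Flin \<psi> \<theta>)"
    and v\<psi>: "\<And>y. y \<in> space Y \<Longrightarrow> v \<bullet> \<psi> y = 1" and "v \<noteq> 0"
    and min: "\<And>\<theta>. cgf_exists M X0 (Flin \<psi> \<theta>) \<Longrightarrow> Gamma M Y X0 X1 \<psi> v \<theta>o \<le> Gamma M Y X0 X1 \<psi> v \<theta>"
    and level: "cgf_exists M X0 (Flin \<psi> \<theta>)" "cgf M X0 (Flin \<psi> \<theta>) = \<rho>"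
  shows "m1 M Y X1 (Flin \<psi> \<theta>) \<le> m1 M Y X1 (Flin \<psi> (\<theta>o + (\<rho> - cgf M X0 (Flin \<psi> \<theta>o)) *\<^sub>R v))"
proof -
  have shift: "\<And>\<theta> r y. y \<in> space Y \<Longrightarrow> Flin \<psi> (\<theta> + r *\<^sub>R v) y = Flin \<psi> \<theta> y + r"
    using v\<psi> by (rule Flin_add_scaleR)
  define s where "s = (v \<bullet> \<theta>) / (v \<bullet> v)"
  define \<eta> where "\<eta> = \<theta> + (- s) *\<^sub>R v"
  have "v \<bullet> \<eta> = 0" using \<open>v \<noteq> 0\<close> by (simp add: \<eta>_def s_def inner_add_right inner_diff_right)
  moreover have "cgf_exists M X0 (Flin \<psi> \<eta>)" "cgf M X0 (Flin \<psi> \<eta>) = \<rho> - s"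
    using cgf_shift[OF M X0_meas shift level(1), of "- s"] level(2) by (simp_all add: \<eta>_def)
  moreover have "m1 M Y X1 (Flin \<psi> \<eta>) = m1 M Y X1 (Flin \<psi> \<theta>) - s"
    using m1_shift[OF M X1_meas int shift[where \<theta>=\<theta> and r="- s"]] by (simp add: \<eta>_def)
  ultimately have "Gamma M Y X0 X1 \<psi> v \<theta>o \<le> \<rho> - m1 M Y X1 (Flin \<psi> \<theta>)"
    using min[of \<eta>] by (simp add: Gamma_def Gamma0_def)
  moreover have "Gamma0 M Y X0 X1 \<psi> \<theta>o \<le> Gamma M Y X0 X1 \<psi> v \<theta>o"
    by (simp add: Gamma_def)
  moreover have "m1 M Y X1 (Flin \<psi> (\<theta>o + (\<rho> - cgf M X0 (Flin \<psi> \<theta>o)) *\<^sub>R v))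
                   = \<rho> - Gamma0 M Y X0 X1 \<psi> \<theta>o"
    using m1_shift[OF M X1_meas int shift] by (simp add: Gamma0_def)
  ultimately show ?thesis by linarith
qed

theorem propositiont:
  fixes M :: "'w measure" and Y :: "'y measure"
    and X0 X1 :: "nat \<Rightarrow> 'w \<Rightarrow> 'y" and \<tau> :: "'w \<Rightarrow> nat"
    and \<rho> :: real and \<psi> :: "'y \<Rightarrow> real ^ 'd" and \<Theta> :: "(real ^ 'd) set"
    and v \<theta>o :: "real ^ 'd"
  assumes M: "prob_space M"
    and X0_meas: "\<And>k. X0 k \<in> measurable M Y"
    and X1_meas: "\<And>k. X1 k \<in> measurable M Y"
    and \<tau>_meas: "\<tau> \<in> measurable M (count_space UNIV)"
    and stat0: "stationary M Y X0"
    and stat1: "stationary M Y X1"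
    \<comment> \<open>X0, X1, tau mutually independent: joint law = product of the laws\<close>
    and indep: "distr M (PiM UNIV (\<lambda>_. Y) \<Otimes>\<^sub>M (PiM UNIV (\<lambda>_. Y) \<Otimes>\<^sub>M count_space UNIV))
                   (\<lambda>\<omega>. ((\<lambda>n. X0 n \<omega>), (\<lambda>n. X1 n \<omega>), \<tau> \<omega>))
                = distr M (PiM UNIV (\<lambda>_. Y)) (\<lambda>\<omega> n. X0 n \<omega>) \<Otimes>\<^sub>M
                    (distr M (PiM UNIV (\<lambda>_. Y)) (\<lambda>\<omega> n. X1 n \<omega>) \<Otimes>\<^sub>M
                     distr M (count_space UNIV) \<tau>)"
    \<comment> \<open>(A2)\<close>
    and A2_pos: "0 < \<rho>"
    and A2: "(\<lambda>n. ln (measure M {\<omega>\<in>space M. \<tau> \<omega> \<ge> n}) / real n) \<longlonglongrightarrow> - \<rho>"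
    \<comment> \<open>(A4)\<close>
    and \<Theta>_open: "open \<Theta>"
    and A4_A3: "\<And>\<theta>. \<theta> \<in> \<Theta> \<Longrightarrow> A3 M Y X0 X1 \<rho> (Flin \<psi> \<theta>)"
    and A4_i: "\<And>i. in_classG M Y X0 X1 (\<lambda>y. \<psi> y $ i)"
    and A4_ii: "\<exists>U. open U \<and> {(t, \<theta>). \<theta> \<in> \<Theta> \<and> t \<in> {0..theta_plus M X0 \<rho> (Flin \<psi> \<theta>)}} \<subseteq> U
                 \<and> (\<forall>(t, \<theta>)\<in>U. cgf_exists M X0 (\<lambda>y. t * Flin \<psi> \<theta> y))
                 \<and> C1_on U (\<lambda>(t, \<theta>). cgf M X0 (\<lambda>y. t * Flin \<psi> \<theta> y))"
    and A4_iii: "\<And>y. y \<in> space Y \<Longrightarrow> v \<bullet> \<psi> y = 1"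
    and m1_pos: "\<And>\<theta>. \<theta> \<in> \<Theta> \<Longrightarrow> 0 < m1 M Y X1 (Flin \<psi> \<theta>)"
    and min_ex: "cgf_exists M X0 (Flin \<psi> \<theta>o)"
    and min: "\<And>\<theta>. cgf_exists M X0 (Flin \<psi> \<theta>) \<Longrightarrow>
                 Gamma M Y X0 X1 \<psi> v \<theta>o \<le> Gamma M Y X0 X1 \<psi> v \<theta>"
    \<comment> \<open>theta^* = theta_o + r_o v with r_o = rho - Lambda_0(F_{theta_o})\<close>
    and star_in: "\<theta>o + (\<rho> - cgf M X0 (Flin \<psi> \<theta>o)) *\<^sub>R v \<in> \<Theta>"
  shows "\<forall>\<kappa>>1. \<forall>\<theta>\<in>\<Theta>.
           Jbar M Y X0 X1 \<rho> (Flin \<psi> (\<theta>o + (\<rho> - cgf M X0 (Flin \<psi> \<theta>o)) *\<^sub>R v)) \<kappa>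
             \<le> Jbar M Y X0 X1 \<rho> (Flin \<psi> \<theta>) \<kappa>"
proof (intro allI impI ballI)
  fix \<kappa> :: real and \<theta> assume "1 < \<kappa>" and \<theta>: "\<theta> \<in> \<Theta>"
  define \<theta>s where "\<theta>s = \<theta>o + (\<rho> - cgf M X0 (Flin \<psi> \<theta>o)) *\<^sub>R v"
  interpret prob_space M by (rule M)
  have "space Y \<noteq> {}" using measurable_space[OF X0_meas] not_empty by blast
  then have "v \<noteq> 0" using A4_iii by force
  have int: "integrable (marginal M Y X1) (Flin \<psi> \<theta>')" for \<theta>'
    using A4_i by (rule integrable_Flin)
  have shift: "y \<in> space Y \<Longrightarrow> Flin \<psi> \<theta>s y = Flin \<psi> \<theta>o y + (\<rho> - cgf M X0 (Flin \<psi> \<theta>o))" for y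
    unfolding \<theta>s_def using A4_iii by (rule Flin_add_scaleR)
  have "theta_plus M X0 \<rho> (Flin \<psi> \<theta>s) = 1"
    using cgf_shift[OF M X0_meas shift min_ex] star_in
    by (intro theta_plus_eqI[OF M A2_pos A4_A3]) (simp_all add: \<theta>s_def)
  then have J\<theta>s: "Jbar M Y X0 X1 \<rho> (Flin \<psi> \<theta>s) \<kappa> = ln \<kappa> / m1 M Y X1 (Flin \<psi> \<theta>s)"
    by (simp add: Jbar_def)
  define T where "T = theta_plus M X0 \<rho> (Flin \<psi> \<theta>)"
  have T: "0 < T" "cgf_exists M X0 (Flin \<psi> (T *\<^sub>R \<theta>))" "cgf M X0 (Flin \<psi> (T *\<^sub>R \<theta>)) = \<rho>"
    using theta_plus_level[OF M A2_pos A4_A3[OF \<theta>]] by (simp_all add: T_def Flin_scaleR)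
  have J\<theta>: "Jbar M Y X0 X1 \<rho> (Flin \<psi> \<theta>) \<kappa> = ln \<kappa> / m1 M Y X1 (Flin \<psi> (T *\<^sub>R \<theta>))"
    unfolding Jbar_def T_def Flin_scaleR m1_scale by (simp add: mult.commute)
  have "0 < m1 M Y X1 (Flin \<psi> (T *\<^sub>R \<theta>))"
    using T m1_pos[OF \<theta>] by (simp add: Flin_scaleR m1_scale)
  moreover have "m1 M Y X1 (Flin \<psi> (T *\<^sub>R \<theta>)) \<le> m1 M Y X1 (Flin \<psi> \<theta>s)"
    unfolding \<theta>s_def using M X0_meas X1_meas int A4_iii \<open>v \<noteq> 0\<close> min T(2,3)
    by (rule m1_le_at_shifted_minimizer)
  ultimately have "ln \<kappa> / m1 M Y X1 (Flin \<psi> \<theta>s) \<le> ln \<kappa> / m1 M Y X1 (Flin \<psi> (T *\<^sub>R \<theta>))"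
    using \<open>1 < \<kappa>\<close> by (intro divide_left_mono) auto
  then show "Jbar M Y X0 X1 \<rho> (Flin \<psi> \<theta>s) \<kappa> \<le> Jbar M Y X0 X1 \<rho> (Flin \<psi> \<theta>) \<kappa>"
    by (simp only: J\<theta>s J\<theta>)
qed

end
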